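(* Let $n\ge 1$ and let $\mathcal C\subset M_n(\mathbb{F}_2)$ be an additively closed set of $n\times n$ matrices over $\mathbb{F}_2$ (identified with $\mathbb{F}_2$-linear maps $\mathbb{F}_2^n\to\mathbb{F}_2^n$) such that $|\mathcal C|=2^{2n}$ and $\mathrm{rank}(A)\ge n-1$ for all $0\ne A\in\mathcal C$. Then there exist two presemifields $(\mathbb{F}_2^n,\star)$ and $(\mathbb{F}_2^n,\circ)$ such that \[ \mathcal C=\{x\mapsto a\star x-b\circ x \;:\; a,b\in\mathbb{F}_2^n\}. \] In particular, $\mathcal C$ contains an additively closed set $\mathcal C'$ with $|\mathcal C'|=2^n$ all of whose nonzero elements are invertible.
   Context: A presemifield $(\mathbb{F}_q^n,\circ)$ is the vector space $\mathbb{F}_q^n$ equipped with a multiplication $\circ$ that is biadditive (distributive on both sides, not necessarily associative, no identity required) and has no zero divisors: $x\circ y=0$ implies $x=0$ or $y=0$. Equivalently, it is a finite-dimensional (not necessarily associative) division algebra over a finite field. For a presemifield, the set $\{x\mapsto x\circ y: y\in\mathbb{F}_q^n\}$ is an additive set of $q^n$ matrices in $M_n(\mathbb{F}_q)$ all of whose nonzero elements are invertible (a semifield spread set). In the terminology of rank-metric codes, $\mathcal C$ in the claim is an additive maximum rank distance (MRD) code with minimum distance $n-1$. *)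

theory Defs
  imports "HOL-Analysis.Analysis"
begin

definition presemifield :: "('v::ab_group_add \<Rightarrow> 'v \<Rightarrow> 'v) \<Rightarrow> bool" where
  "presemifield m \<longleftrightarrow>
     (\<forall>x y z. m (x + y) z = m x z + m y z) \<and>
     (\<forall>x y z. m x (y + z) = m x y + m x z) \<and>
     (\<forall>x y. m x y = 0 \<longrightarrow> x = 0 \<or> y = 0)"

definition additively_closed :: "'a::plus set \<Rightarrow> bool" where
  "additively_closed S \<longleftrightarrow> (\<forall>A\<in>S. \<forall>B\<in>S. A + B \<in> S)"

end

theory Submission
  imports Defs
begin

text \<open>
  Over \<open>\<F>\<^sub>2\<close> two distinct nonzero vectors \<open>s, t\<close> are linearly independent, so a nonzero
  \<open>A \<in> C\<close> (of rank at least \<open>n - 1\<close>) cannot kill both; by counting, \<open>A \<mapsto> (A s, A t)\<close>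
  is then a bijection from \<open>C\<close> onto pairs of vectors. Hence for \<open>s, w \<noteq> 0\<close> the fibre
  \<open>{A \<in> C. A s = w}\<close> has \<open>2\<^sup>n\<close> elements, exactly \<open>2\<^sup>n - 2\<close> of them singular (one for each
  possible kernel vector \<open>u \<notin> {0, s}\<close>), so exactly two are invertible. The whole fibre
  sums to \<open>0\<close>, so these two sum to the sum of the singular ones, which is additive in \<open>w\<close>.
  From this additivity one shows that "\<open>B = A\<close> or \<open>A + B\<close> is invertible" is an equivalence
  relation on the \<open>2 (2\<^sup>n - 1)\<close> invertible elements of \<open>C\<close> with classes of size
  \<open>2\<^sup>n - 1\<close>. Each of the two classes together with \<open>0\<close> is a spread set, \<open>C\<close> is their direct
  sum, and a spread set \<open>S\<close> yields the presemifield \<open>a \<circ> x = \<phi>(a) x\<close>, where \<open>\<phi>(a)\<close> is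
  the unique element of \<open>S\<close> mapping a fixed \<open>s \<noteq> 0\<close> to \<open>a\<close>.
\<close>

lemma card2_field_cases:
  assumes "CARD('f::field) = 2"
  shows "(x::'f) = 0 \<or> x = 1"
proof -
  have "finite (UNIV::'f set)"
    using assms card.infinite by fastforce
  then have "{0, 1} = (UNIV::'f set)"
    by (intro card_subset_eq) (simp_all add: assms)
  then show ?thesis by auto
qed

lemma card2_field_add_self:
  assumes "CARD('f::field) = 2"
  shows "(x::'f) + x = 0"
proof -
  have one: "(1::'f) + 1 = 0"
  proof (rule ccontr)
    assume "(1::'f) + 1 \<noteq> 0"
    then have "(1::'f) + 1 = 1" using card2_field_cases[OF assms] by blast
    then show False by (simp only: add_cancel_left_right one_neq_zero)
  qed
  from card2_field_cases[OF assms, of x] show ?thesis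
  proof
    assume "x = 1"
    then show ?thesis using one by (simp only:)
  qed simp
qed


lemma card2_field_two_eq_0:
  assumes "CARD('f::field) = 2"
  shows "(2::'f) = 0"
  using card2_field_add_self[OF assms, of 1] by (simp add: one_add_one)

lemma vec_add_self_eq_0:
  assumes "\<And>a::'a::ab_group_add. a + a = 0"
  shows "(x::'a^'n) + x = 0"
  by (simp add: vec_eq_iff assms)

lemma card2_vec_add_self:
  assumes "CARD('f::field) = 2"
  shows "(x::'f^'n) + x = 0"
  by (rule vec_add_self_eq_0[OF card2_field_add_self[OF assms]])

lemma card2_mat_add_self:
  assumes "CARD('f::field) = 2"
  shows "(x::'f^'n^'m) + x = 0"
  by (rule vec_add_self_eq_0[OF card2_vec_add_self[OF assms]])


lemma card2_finite_vec:
  assumes "CARD('f::field) = 2"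
  shows "finite (UNIV :: ('f^'n) set)"
  by (rule card_ge_0_finite) (simp add: assms)

lemma char2_minus_eq:
  assumes "\<And>a::'a::ab_group_add. a + a = 0"
  shows "- (x::'a) = x"
  using assms[of x] by (simp only: neg_eq_iff_add_eq_0)

lemma char2_add_eq_0_iff:
  assumes "\<And>a::'a::ab_group_add. a + a = 0"
  shows "(x::'a) + y = 0 \<longleftrightarrow> x = y"
  using add_eq_0_iff[of x y] char2_minus_eq[OF assms, of x] by auto

lemma char2_diff_eq_add:
  assumes "\<And>a::'a::ab_group_add. a + a = 0"
  shows "(x::'a) - y = x + y"
  by (simp add: char2_minus_eq[OF assms])

lemma matrix_vector_mult_sum_left: "(\<Sum>i\<in>I. A i) *v x = (\<Sum>i\<in>I. A i *v x)"
  by (induction I rule: infinite_finite_induct) (simp_all add: matrix_vector_mult_add_rdistrib)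

lemma invertible_iff_ker_trivial:
  "invertible (A::'a::field^'n^'n) \<longleftrightarrow> (\<forall>x. A *v x = 0 \<longrightarrow> x = 0)"
  by (simp add: invertible_left_inverse matrix_left_invertible_ker)

definition dotp :: "'a::field^'n \<Rightarrow> 'a^'n \<Rightarrow> 'a" where
  "dotp r u = (\<Sum>i\<in>UNIV. r$i * u$i)"

lemma dotp_zero_left [simp]: "dotp 0 u = 0"
  by (simp add: dotp_def)

lemma dotp_add_left: "dotp (r + r') u = dotp r u + dotp r' u"
  by (simp add: dotp_def distrib_right sum.distrib)

lemma dotp_scale_left: "dotp (c *s r) u = c * dotp r u"
  by (simp add: dotp_def sum_distrib_left mult.assoc)

lemma dotp_diff_left: "dotp (r - r') u = dotp r u - dotp r' u"
  unfolding dotp_def by (simp add: left_diff_distrib sum_subtractf)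

lemma dotp_axis_left: "dotp (axis i 1) u = u$i"
  by (simp add: dotp_def axis_def if_distrib[of "\<lambda>x. x * _"] sum.delta cong: if_cong)

lemma dotp_row: "dotp (row i A) u = (A *v u)$i"
  by (simp add: dotp_def row_def matrix_vector_mult_def)

lemma rank_add_two_le:
  fixes A :: "'a::field^'n^'m"
  assumes "A *v u = 0" "A *v v = 0"
    and p: "dotp p u \<noteq> 0" "dotp p v = 0" and q: "dotp q v \<noteq> 0"
  shows "rank A + 2 \<le> CARD('n)"
proof -
  define W where "W = {r. dotp r u = 0 \<and> dotp r v = 0}"
  have "vec.subspace W"
    by (rule vec.subspaceI) (auto simp: W_def dotp_add_left dotp_scale_left)
  then have span_W: "vec.span W = W" by simp
  have "rows A \<subseteq> W"
    using assms(1,2) by (auto simp: rows_def W_def dotp_row)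
  then have "rank A \<le> vec.dim W"
    unfolding row_rank_def_gen by (rule vec.dim_subset)
  have p_notin: "p \<notin> vec.span W"
    using p unfolding span_W by (simp add: W_def)
  have q_notin: "q \<notin> vec.span (insert p W)"
  proof
    assume "q \<in> vec.span (insert p W)"
    then obtain k where "q - k *s p \<in> W"
      unfolding vec.span_insert span_W by blast
    then show False
      using p q by (simp add: W_def dotp_diff_left dotp_scale_left)
  qed
  have "vec.dim (insert q (insert p W)) = vec.dim W + 2"
    using p_notin q_notin by (simp add: vec.dim_insert)
  moreover have "vec.dim (insert q (insert p W)) \<le> CARD('n)"
    using vec.dim_subset[of _ UNIV] vec_dim_card by (metis subset_UNIV)
  ultimately show ?thesis
    using \<open>rank A \<le> vec.dim W\<close> by linarith
qed




lemma card2_exists_separating: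
  fixes u v :: "'f::field^'n"
  assumes F2: "CARD('f) = 2" and "u \<noteq> 0" "u \<noteq> v"
  shows "\<exists>p. dotp p u \<noteq> 0 \<and> dotp p v = 0"
proof (cases "\<exists>i. u$i \<noteq> 0 \<and> v$i = 0")
  case True
  then show ?thesis by (metis dotp_axis_left)
next
  case False
  have ones: "u$i = 1 \<and> v$i = 1" if "u$i \<noteq> 0" for i
    using False that card2_field_cases[OF F2] by metis
  obtain i where "u$i \<noteq> 0"
    using \<open>u \<noteq> 0\<close> by (metis vec_eq_iff zero_index)
  obtain j where "u$j \<noteq> v$j"
    using \<open>u \<noteq> v\<close> by (metis vec_eq_iff)
  then have "u$j = 0" "v$j = 1"
    using ones card2_field_cases[OF F2] by metis+
  then have "dotp (axis i 1 + axis j 1) u = 1" "dotp (axis i 1 + axis j 1) v = 0"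
    using ones[OF \<open>u$i \<noteq> 0\<close>] card2_field_two_eq_0[OF F2]
    by (simp_all add: dotp_add_left dotp_axis_left)
  then show ?thesis by (metis one_neq_zero)
qed

lemma card2_rank_add_two_le:
  fixes A :: "'f::field^'n^'m"
  assumes F2: "CARD('f) = 2" and "A *v u = 0" "A *v v = 0" "u \<noteq> 0" "v \<noteq> 0" "u \<noteq> v"
  shows "rank A + 2 \<le> CARD('n)"
proof -
  obtain p where "dotp p u \<noteq> 0" "dotp p v = 0"
    using card2_exists_separating[OF F2 \<open>u \<noteq> 0\<close> \<open>u \<noteq> v\<close>] by blast
  moreover obtain q where "dotp q v \<noteq> 0"
    using card2_exists_separating[OF F2 \<open>v \<noteq> 0\<close>, of u] \<open>u \<noteq> v\<close> by blast
  ultimately show ?thesis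
    using rank_add_two_le[OF assms(2,3)] by blast
qed

lemma card2_sum_UNIV_vec:
  assumes F2: "CARD('f::field) = 2" and "CARD('n) \<ge> 2"
  shows "(\<Sum>y\<in>UNIV. y :: 'f^'n) = 0"
proof (subst vec_eq_iff, rule allI)
  fix i :: 'n
  obtain j :: 'n where "j \<noteq> i"
  proof -
    have "\<not> CARD('n) \<le> Suc 0" using assms(2) by simp
    then obtain a b :: 'n where "a \<noteq> b"
      by (auto simp: card_le_Suc0_iff_eq)
    then show ?thesis using that by metis
  qed
  define e :: "'f^'n" where "e = axis j 1"
  define V0 where "V0 = {y::'f^'n. y$j = 0}"
  have "e$i = 0" "e$j = 1"
    using \<open>j \<noteq> i\<close> by (simp_all add: e_def axis_def)
  have shift: "(\<lambda>y. e + y) ` V0 = - V0"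
  proof (intro equalityI subsetI)
    fix y assume "y \<in> - V0"
    then have "y$j = 1"
      using card2_field_cases[OF F2, of "y$j"] by (simp add: V0_def)
    then have "(e + y)$j = 0"
      using \<open>e$j = 1\<close> card2_field_add_self[OF F2, of 1] by simp
    moreover have "y = e + (e + y)"
      by (simp only: add.assoc[symmetric] card2_vec_add_self[OF F2] add_0_left)
    ultimately show "y \<in> (\<lambda>y. e + y) ` V0"
      unfolding V0_def by blast
  qed (auto simp: V0_def \<open>e$j = 1\<close>)
  have "inj_on (\<lambda>y. e + y) V0"
    by (rule inj_onI) simp
  then have "(\<Sum>y\<in>-V0. y$i) = (\<Sum>y\<in>V0. (e + y)$i)"
    by (simp add: shift[symmetric] sum.reindex)
  also have "\<dots> = (\<Sum>y\<in>V0. y$i)"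
    using \<open>e$i = 0\<close> by simp
  finally have compl: "(\<Sum>y\<in>-V0. y$i) = (\<Sum>y\<in>V0. y$i)" .
  have "finite V0" "finite (-V0)"
    using finite_subset[OF subset_UNIV card2_finite_vec[OF F2]] by blast+
  then have "(\<Sum>y\<in>UNIV. y$i) = (\<Sum>y\<in>V0. y$i) + (\<Sum>y\<in>V0. y$i)"
    using sum.union_disjoint[of V0 "-V0" "\<lambda>y. y$i"] compl by simp
  then show "(\<Sum>y\<in>UNIV. y)$i = (0::'f^'n)$i"
    by (simp add: sum_component card2_field_add_self[OF F2])
qed

lemma char2_direct_sum:
  fixes C S1 S2 :: "'a::ab_group_add set"
  assumes char2: "\<And>x::'a. x + x = 0"
    and closed: "additively_closed S1" "additively_closed S2" "additively_closed C"
    and "S1 \<subseteq> C" "S2 \<subseteq> C" "S1 \<inter> S2 = {0}"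
    and "finite C" "card S1 * card S2 = card C"
  shows "C = {P + R | P R. P \<in> S1 \<and> R \<in> S2}"
proof -
  let ?sum = "\<lambda>(P, R). P + R"
  have "inj_on ?sum (S1 \<times> S2)"
  proof (rule inj_onI, clarify)
    fix P R P' R'
    assume mem: "P \<in> S1" "R \<in> S2" "P' \<in> S1" "R' \<in> S2" and "P + R = P' + R'"
    have "P + P' + (R + R') = (P + R) + (P' + R')"
      by (simp only: ac_simps)
    also have "\<dots> = 0"
      by (simp only: \<open>P + R = P' + R'\<close> char2)
    finally have "P + P' = R + R'"
      by (simp only: char2_add_eq_0_iff[OF char2])
    moreover have "P + P' \<in> S1" "R + R' \<in> S2"
      using mem closed by (auto simp: additively_closed_def)
    ultimately have "P + P' \<in> S1 \<inter> S2"
      by simp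
    then have "P + P' = 0"
      using \<open>S1 \<inter> S2 = {0}\<close> by simp
    then have "P = P'"
      by (simp only: char2_add_eq_0_iff[OF char2])
    then show "P = P' \<and> R = R'"
      using \<open>P + R = P' + R'\<close> by simp
  qed
  moreover have "?sum ` (S1 \<times> S2) \<subseteq> C"
    using assms(4-6) closed(3) by (auto simp: additively_closed_def)
  ultimately have "?sum ` (S1 \<times> S2) = C"
    using assms(8,9) by (intro card_subset_eq) (simp_all add: card_image card_cartesian_product)
  then show ?thesis by auto
qed

definition spread_set :: "('a::field^'n^'n) set \<Rightarrow> bool" where
  "spread_set S \<longleftrightarrow>
     additively_closed S \<and> card S = CARD('a^'n) \<and> (\<forall>A\<in>S. A \<noteq> 0 \<longrightarrow> invertible A)"

lemma card2_spread_set_eval_bij: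
  fixes S :: "('f::field^'n^'n) set"
  assumes F2: "CARD('f) = 2" and "spread_set S" and "s \<noteq> 0"
  shows "bij_betw (\<lambda>A. A *v s) S UNIV"
proof -
  have "inj_on (\<lambda>A. A *v s) S"
  proof (rule inj_onI)
    fix A B assume "A \<in> S" "B \<in> S" "A *v s = B *v s"
    then have "(A + B) *v s = 0"
      by (simp only: matrix_vector_mult_add_rdistrib card2_vec_add_self[OF F2])
    moreover have "A + B \<in> S"
      using \<open>spread_set S\<close> \<open>A \<in> S\<close> \<open>B \<in> S\<close> by (simp add: spread_set_def additively_closed_def)
    ultimately have "A + B = 0"
      using \<open>spread_set S\<close> \<open>s \<noteq> 0\<close> by (auto simp: spread_set_def invertible_iff_ker_trivial)
    then show "A = B"
      using char2_add_eq_0_iff[OF card2_mat_add_self[OF F2]] by blast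
  qed
  moreover have "(\<lambda>A. A *v s) ` S = UNIV"
    using calculation \<open>spread_set S\<close> card2_finite_vec[OF F2]
    by (intro card_subset_eq) (auto simp: card_image spread_set_def)
  ultimately show ?thesis by (simp add: bij_betw_def)
qed

lemma card2_spread_set_range:
  fixes S :: "('f::field^'n^'n) set"
  assumes "CARD('f) = 2" and "spread_set S" and "s \<noteq> 0"
  shows "range (the_inv_into S (\<lambda>A. A *v s)) = S"
  using bij_betw_the_inv_into[OF card2_spread_set_eval_bij[OF assms]] by (simp add: bij_betw_def)

lemma card2_spread_set_presemifield:
  fixes S :: "('f::field^'n^'n) set"
  assumes F2: "CARD('f) = 2" and S: "spread_set S" and "s \<noteq> 0"
  shows "presemifield (\<lambda>a x. the_inv_into S (\<lambda>A. A *v s) a *v x)"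
proof -
  let ?\<phi> = "the_inv_into S (\<lambda>A. A *v s)"
  have bij: "bij_betw (\<lambda>A. A *v s) S UNIV"
    using card2_spread_set_eval_bij[OF assms] .
  have \<phi>_in: "?\<phi> a \<in> S" and \<phi>_eval: "?\<phi> a *v s = a" for a
    using bij_betw_apply[OF bij_betw_the_inv_into[OF bij]] f_the_inv_into_f_bij_betw[OF bij]
    by auto
  have "?\<phi> (a + b) = ?\<phi> a + ?\<phi> b" for a b
  proof (rule the_inv_into_f_eq)
    show "inj_on (\<lambda>A. A *v s) S" using bij by (rule bij_betw_imp_inj_on)
    show "(?\<phi> a + ?\<phi> b) *v s = a + b"
      by (simp add: matrix_vector_mult_add_rdistrib \<phi>_eval)
    show "?\<phi> a + ?\<phi> b \<in> S"
      using S \<phi>_in by (simp add: spread_set_def additively_closed_def)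
  qed
  moreover have "x = 0 \<or> y = 0" if "?\<phi> x *v y = 0" for x y
  proof (cases "x = 0")
    case False
    then have "?\<phi> x \<noteq> 0" using \<phi>_eval[of x] by auto
    then have "invertible (?\<phi> x)" using S \<phi>_in by (simp add: spread_set_def)
    then show ?thesis using that by (simp add: invertible_iff_ker_trivial)
  qed simp
  ultimately show ?thesis
    by (simp add: presemifield_def matrix_vector_mult_add_rdistrib matrix_vector_right_distrib)
qed

lemma card2_direct_sum_presemifields:
  fixes C S1 S2 :: "('f::field^'n^'n) set"
  assumes F2: "CARD('f) = 2" and S: "spread_set S1" "spread_set S2"
    and C: "C = {P + R | P R. P \<in> S1 \<and> R \<in> S2}"
  shows "\<exists>star circ. presemifield star \<and> presemifield circ \<and>
           (\<lambda>A. (\<lambda>x. A *v x)) ` C = {(\<lambda>x. star a x - circ b x) | a b. True}"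
proof -
  define s :: "'f^'n" where "s = vec 1"
  have "s \<noteq> 0"
    by (simp add: s_def vec_eq_iff)
  define \<phi>\<^sub>1 where "\<phi>\<^sub>1 = the_inv_into S1 (\<lambda>A. A *v s)"
  define \<phi>\<^sub>2 where "\<phi>\<^sub>2 = the_inv_into S2 (\<lambda>A. A *v s)"
  have "C = {P + R | P R. P \<in> range \<phi>\<^sub>1 \<and> R \<in> range \<phi>\<^sub>2}"
    unfolding C \<phi>\<^sub>1_def \<phi>\<^sub>2_def
    by (simp only: card2_spread_set_range[OF F2 S(1) \<open>s \<noteq> 0\<close>] card2_spread_set_range[OF F2 S(2) \<open>s \<noteq> 0\<close>])
  then have "(\<lambda>A. (\<lambda>x. A *v x)) ` C = {(\<lambda>x. (\<phi>\<^sub>1 a + \<phi>\<^sub>2 b) *v x) | a b. True}"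
    by blast
  also have "\<dots> = {(\<lambda>x. \<phi>\<^sub>1 a *v x - \<phi>\<^sub>2 b *v x) | a b. True}"
    by (simp only: char2_diff_eq_add[OF card2_vec_add_self[OF F2]] matrix_vector_mult_add_rdistrib)
  finally have "(\<lambda>A. (\<lambda>x. A *v x)) ` C = {(\<lambda>x. \<phi>\<^sub>1 a *v x - \<phi>\<^sub>2 b *v x) | a b. True}" .
  moreover have "presemifield (\<lambda>a x. \<phi>\<^sub>1 a *v x)" "presemifield (\<lambda>b x. \<phi>\<^sub>2 b *v x)"
    unfolding \<phi>\<^sub>1_def \<phi>\<^sub>2_def using card2_spread_set_presemifield[OF F2 _ \<open>s \<noteq> 0\<close>] S by blast+
  ultimately show ?thesis
    by blast
qed

locale binary_mrd_code =
  fixes C :: "('f::field ^ 'n ^ 'n) set"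
  assumes card_field: "CARD('f) = 2"
    and add_closed: "additively_closed C"
    and card_C: "card C = 2 ^ (2 * CARD('n))"
    and rank_C: "\<forall>A\<in>C. A \<noteq> 0 \<longrightarrow> rank A \<ge> CARD('n) - 1"
begin

lemma vec_add_self [simp]: "(x::'f^'n) + x = 0"
  by (rule card2_vec_add_self[OF card_field])

lemma mat_add_self [simp]: "(A::'f^'n^'n) + A = 0"
  by (rule card2_mat_add_self[OF card_field])

lemma mat_two_eq_0 [simp]: "(2::'f^'n^'n) = 0"
  by (simp only: one_add_one[symmetric] mat_add_self)

lemma vec_add_eq_0_iff: "(x::'f^'n) + y = 0 \<longleftrightarrow> x = y"
  by (rule char2_add_eq_0_iff) simp

lemma mat_add_eq_0_iff: "(A::'f^'n^'n) + B = 0 \<longleftrightarrow> A = B"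
  by (rule char2_add_eq_0_iff) simp

lemma card_vec: "CARD('f^'n) = 2 ^ CARD('n)"
  using card_field by simp

lemma finite_vec: "finite (UNIV :: ('f^'n) set)"
  by (rule card2_finite_vec[OF card_field])

lemma add_in_C: "A \<in> C \<Longrightarrow> B \<in> C \<Longrightarrow> A + B \<in> C"
  using add_closed by (simp add: additively_closed_def)

lemma finite_C: "finite C"
  using card_C by (intro card_ge_0_finite) simp

lemma zero_in_C: "0 \<in> C"
proof -
  obtain A where "A \<in> C"
    using card_C by fastforce
  then show ?thesis
    using add_in_C[of A A] by simp
qed

lemma sum_in_C: "F \<subseteq> C \<Longrightarrow> (\<Sum>A\<in>F. A) \<in> C"
  by (induction F rule: infinite_finite_induct) (simp_all add: zero_in_C add_in_C)

lemma card_index_ge_2: "CARD('n) \<ge> 2"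
proof -
  have "card C \<le> CARD('f^'n^'n)"
    by (intro card_mono card_ge_0_finite) (simp_all add: card_field)
  then have "(2::nat) ^ (2 * CARD('n)) \<le> 2 ^ (CARD('n) * CARD('n))"
    using card_C card_field by (simp add: power_mult)
  then have "2 * CARD('n) \<le> CARD('n) * CARD('n)"
    by simp
  then show ?thesis by simp
qed

lemma four_le_card_vec: "4 \<le> CARD('f^'n)"
proof -
  have "(2::nat) ^ 2 \<le> 2 ^ CARD('n)"
    using card_index_ge_2 by (intro power_increasing) simp_all
  then show ?thesis by (simp add: card_field)
qed

lemma exists_vec_notin: "\<exists>t::'f^'n. t \<notin> {a, b, c}"
proof (rule ccontr)
  assume "\<not> ?thesis"
  then have "{a, b, c} = (UNIV :: ('f^'n) set)" by blast
  moreover have "card {a, b, c} \<le> 3"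
    by (auto simp: card_insert_if)
  ultimately show False
    using four_le_card_vec by simp
qed

lemma eq_0_if_kills_two:
  assumes "A \<in> C" "A *v s = 0" "A *v t = 0" "s \<noteq> 0" "t \<noteq> 0" "s \<noteq> t"
  shows "A = 0"
proof (rule ccontr)
  assume "A \<noteq> 0"
  then have "CARD('n) - 1 \<le> rank A"
    using rank_C \<open>A \<in> C\<close> by blast
  moreover have "rank A + 2 \<le> CARD('n)"
    using card2_rank_add_two_le[OF card_field assms(2-6)] .
  ultimately show False
    using card_index_ge_2 by linarith
qed

lemma eval_pair_bij:
  assumes "s \<noteq> 0" "t \<noteq> 0" "s \<noteq> t"
  shows "bij_betw (\<lambda>A. (A *v s, A *v t)) C UNIV"
proof -
  have inj: "inj_on (\<lambda>A. (A *v s, A *v t)) C"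
  proof (rule inj_onI)
    fix A B assume "A \<in> C" "B \<in> C" and eq: "(A *v s, A *v t) = (B *v s, B *v t)"
    have "(A + B) *v s = 0" "(A + B) *v t = 0"
      using eq by (simp_all add: matrix_vector_mult_add_rdistrib)
    then have "A + B = 0"
      using eq_0_if_kills_two add_in_C \<open>A \<in> C\<close> \<open>B \<in> C\<close> assms by blast
    then show "A = B"
      by (simp only: mat_add_eq_0_iff)
  qed
  have "card ((\<lambda>A. (A *v s, A *v t)) ` C) = card (UNIV :: (('f^'n) \<times> ('f^'n)) set)"
    using card_C card_field by (simp add: card_image[OF inj] power_add[symmetric] mult_2)
  then have "(\<lambda>A. (A *v s, A *v t)) ` C = UNIV"
    by (intro card_subset_eq finite_Prod_UNIV finite_vec) simp_all
  then show ?thesis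
    using inj by (simp add: bij_betw_def)
qed

definition interpolant :: "'f^'n \<Rightarrow> 'f^'n \<Rightarrow> 'f^'n \<Rightarrow> 'f^'n \<Rightarrow> 'f^'n^'n" where
  "interpolant s t w y = the_inv_into C (\<lambda>A. (A *v s, A *v t)) (w, y)"

lemma interpolant:
  assumes "s \<noteq> 0" "t \<noteq> 0" "s \<noteq> t"
  shows "interpolant s t w y \<in> C" "interpolant s t w y *v s = w" "interpolant s t w y *v t = y"
proof -
  have bij: "bij_betw (\<lambda>A. (A *v s, A *v t)) C UNIV"
    using eval_pair_bij[OF assms] .
  show "interpolant s t w y \<in> C"
    unfolding interpolant_def using bij_betw_apply[OF bij_betw_the_inv_into[OF bij]] by simp
  have "(interpolant s t w y *v s, interpolant s t w y *v t) = (w, y)"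
    unfolding interpolant_def using f_the_inv_into_f_bij_betw[OF bij] by simp
  then show "interpolant s t w y *v s = w" "interpolant s t w y *v t = y"
    by simp_all
qed

lemma interpolant_unique:
  assumes "s \<noteq> 0" "t \<noteq> 0" "s \<noteq> t" and "A \<in> C" "A *v s = w" "A *v t = y"
  shows "interpolant s t w y = A"
  unfolding interpolant_def
  using assms bij_betw_imp_inj_on[OF eval_pair_bij[OF assms(1-3)]] by (intro the_inv_into_f_eq) simp_all

lemma interpolant_add:
  assumes "s \<noteq> 0" "t \<noteq> 0" "s \<noteq> t"
  shows "interpolant s t (w + w') (y + y') = interpolant s t w y + interpolant s t w' y'"
  using interpolant[OF assms] add_in_C
  by (intro interpolant_unique[OF assms]) (simp_all add: matrix_vector_mult_add_rdistrib)

definition fibre :: "'f^'n \<Rightarrow> 'f^'n \<Rightarrow> ('f^'n^'n) set" where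
  "fibre s w = {A \<in> C. A *v s = w}"

lemma fibre_eval_bij:
  assumes "s \<noteq> 0" "t \<noteq> 0" "s \<noteq> t"
  shows "bij_betw (\<lambda>A. A *v t) (fibre s w) UNIV"
proof (rule bij_betw_byWitness[where f' = "interpolant s t w"])
  show "\<forall>A\<in>fibre s w. interpolant s t w (A *v t) = A"
    using interpolant_unique[OF assms] by (simp add: fibre_def)
  show "interpolant s t w ` UNIV \<subseteq> fibre s w"
    using interpolant[OF assms] by (auto simp: fibre_def)
qed (simp_all add: interpolant[OF assms])

lemma card_fibre:
  assumes "s \<noteq> 0"
  shows "card (fibre s w) = 2 ^ CARD('n)"
proof -
  obtain t :: "'f^'n" where "t \<notin> {0, s}"
    using exists_vec_notin[of 0 s s] by auto
  then show ?thesis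
    using bij_betw_same_card[OF fibre_eval_bij[OF assms, of t]] card_vec by auto
qed

lemma sum_fibre:
  assumes "s \<noteq> 0"
  shows "(\<Sum>A\<in>fibre s w. A) = 0"
proof -
  have kills: "(\<Sum>A\<in>fibre s w. A) *v t = 0" if "t \<notin> {0, s}" for t
  proof -
    have "(\<Sum>A\<in>fibre s w. A) *v t = (\<Sum>A\<in>fibre s w. A *v t)"
      by (rule matrix_vector_mult_sum_left)
    also have "\<dots> = (\<Sum>y\<in>UNIV. y)"
      using that by (intro sum.reindex_bij_betw fibre_eval_bij[OF assms]) auto
    also have "\<dots> = 0"
      using card2_sum_UNIV_vec[OF card_field card_index_ge_2] .
    finally show ?thesis .
  qed
  obtain t :: "'f^'n" where t: "t \<notin> {0, s}"
    using exists_vec_notin[of 0 s s] by auto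
  obtain t' :: "'f^'n" where t': "t' \<notin> {0, s, t}"
    using exists_vec_notin by blast
  have "(\<Sum>A\<in>fibre s w. A) \<in> C"
    by (rule sum_in_C) (simp add: fibre_def)
  then show ?thesis
    using eq_0_if_kills_two kills t t' by (metis insert_iff)
qed

definition invertibles :: "('f^'n^'n) set" where
  "invertibles = {A \<in> C. invertible A}"

lemma invertibles_kills_only_0:
  "A \<in> invertibles \<Longrightarrow> A *v x = 0 \<Longrightarrow> x = 0"
  by (simp add: invertibles_def invertible_iff_ker_trivial)

lemma not_invertible_kills:
  "A \<in> C \<Longrightarrow> A \<notin> invertibles \<Longrightarrow> \<exists>x. x \<noteq> 0 \<and> A *v x = 0"
  by (auto simp: invertibles_def invertible_iff_ker_trivial)

lemma invertibles_subset_C: "invertibles \<subseteq> C"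
  by (simp add: invertibles_def)

text \<open>
  The sum of the singular elements of \<open>fibre s w\<close> (see \<open>singular_fibre_bij\<close>), written
  through interpolants so that additivity in \<open>w\<close> is immediate.
\<close>

definition singular_sum :: "'f^'n \<Rightarrow> 'f^'n \<Rightarrow> 'f^'n^'n" where
  "singular_sum s w = (\<Sum>u\<in>-{0, s}. interpolant s u w 0)"

lemma singular_sum_add:
  assumes "s \<noteq> 0"
  shows "singular_sum s (w + w') = singular_sum s w + singular_sum s w'"
  unfolding singular_sum_def sum.distrib[symmetric]
  using interpolant_add[OF assms, of _ w w' 0 0] by (intro sum.cong) auto

lemma singular_fibre_bij:
  assumes "s \<noteq> 0" "w \<noteq> 0"
  shows "bij_betw (\<lambda>u. interpolant s u w 0) (-{0, s}) (fibre s w - invertibles)"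
proof (rule bij_betw_imageI)
  show "inj_on (\<lambda>u. interpolant s u w 0) (-{0, s})"
  proof (rule inj_onI)
    fix u u' assume "u \<in> -{0, s}" "u' \<in> -{0, s}"
      and eq: "interpolant s u w 0 = interpolant s u' w 0"
    then have "u \<noteq> 0" "u \<noteq> s" "u' \<noteq> 0" "u' \<noteq> s" by auto
    note M = interpolant[OF \<open>s \<noteq> 0\<close> \<open>u \<noteq> 0\<close> \<open>u \<noteq> s\<close>[symmetric], of w 0]
    have "interpolant s u w 0 *v u' = 0"
      using interpolant(3)[OF \<open>s \<noteq> 0\<close> \<open>u' \<noteq> 0\<close> \<open>u' \<noteq> s\<close>[symmetric]] eq by simp
    moreover have "interpolant s u w 0 \<noteq> 0"
      using M(2) \<open>w \<noteq> 0\<close> by auto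
    ultimately show "u = u'"
      using eq_0_if_kills_two[OF M(1) M(3)] \<open>u \<noteq> 0\<close> \<open>u' \<noteq> 0\<close> by blast
  qed
  show "(\<lambda>u. interpolant s u w 0) ` (-{0, s}) = fibre s w - invertibles"
  proof (intro equalityI subsetI)
    fix A assume "A \<in> (\<lambda>u. interpolant s u w 0) ` (-{0, s})"
    then obtain u where "u \<noteq> 0" "u \<noteq> s" and A: "A = interpolant s u w 0" by auto
    note M = interpolant[OF \<open>s \<noteq> 0\<close> \<open>u \<noteq> 0\<close> \<open>u \<noteq> s\<close>[symmetric], of w 0]
    then have "A \<notin> invertibles"
      using invertibles_kills_only_0 \<open>u \<noteq> 0\<close> A by blast
    then show "A \<in> fibre s w - invertibles"
      using M A by (simp add: fibre_def)
  next
    fix A assume "A \<in> fibre s w - invertibles"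
    then have "A \<in> C" "A *v s = w" "A \<notin> invertibles"
      by (auto simp: fibre_def)
    then obtain u where "u \<noteq> 0" "A *v u = 0"
      using not_invertible_kills by blast
    moreover have "u \<noteq> s"
      using \<open>A *v s = w\<close> \<open>A *v u = 0\<close> \<open>w \<noteq> 0\<close> by auto
    ultimately have "A = interpolant s u w 0"
      using interpolant_unique[OF \<open>s \<noteq> 0\<close>] \<open>A \<in> C\<close> \<open>A *v s = w\<close> by metis
    then show "A \<in> (\<lambda>u. interpolant s u w 0) ` (-{0, s})"
      using \<open>u \<noteq> 0\<close> \<open>u \<noteq> s\<close> by auto
  qed
qed

lemma invertible_fibre:
  assumes "s \<noteq> 0" "w \<noteq> 0"
  shows "card (fibre s w \<inter> invertibles) = 2"
    and "(\<Sum>A\<in>fibre s w \<inter> invertibles. A) = singular_sum s w"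
proof -
  have fin: "finite (fibre s w)"
    using finite_C by (simp add: fibre_def)
  have split: "fibre s w = (fibre s w \<inter> invertibles) \<union> (fibre s w - invertibles)"
    by blast
  have "card (-{0, s}) = 2 ^ CARD('n) - 2"
    using finite_vec assms(1) card_vec by (simp add: Compl_eq_Diff_UNIV card_Diff_subset)
  then have "card (fibre s w - invertibles) = 2 ^ CARD('n) - 2"
    using bij_betw_same_card[OF singular_fibre_bij[OF assms]] by simp
  moreover have "card (fibre s w) = card (fibre s w \<inter> invertibles) + card (fibre s w - invertibles)"
    using fin by (subst split) (rule card_Un_disjoint; auto)
  moreover have "4 \<le> (2::nat) ^ CARD('n)"
    using four_le_card_vec card_vec by simp
  ultimately show "card (fibre s w \<inter> invertibles) = 2"
    using card_fibre[OF assms(1), of w] by linarith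
  have "(\<Sum>A\<in>fibre s w - invertibles. A) = singular_sum s w"
    unfolding singular_sum_def using sum.reindex_bij_betw[OF singular_fibre_bij[OF assms], of "\<lambda>A. A"]
    by simp
  moreover have "(\<Sum>A\<in>fibre s w. A) = (\<Sum>A\<in>fibre s w \<inter> invertibles. A) + (\<Sum>A\<in>fibre s w - invertibles. A)"
    using fin by (subst split) (rule sum.union_disjoint; auto)
  ultimately show "(\<Sum>A\<in>fibre s w \<inter> invertibles. A) = singular_sum s w"
    using sum_fibre[OF assms(1)] by (simp add: mat_add_eq_0_iff)
qed

lemma invertible_fibre_pair:
  assumes "s \<noteq> 0" "w \<noteq> 0"
  obtains h1 h2 where "h1 \<noteq> h2" "fibre s w \<inter> invertibles = {h1, h2}" "h1 + h2 = singular_sum s w"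
proof -
  obtain h1 h2 where "h1 \<noteq> h2" "fibre s w \<inter> invertibles = {h1, h2}"
    using invertible_fibre(1)[OF assms] by (auto simp: card_2_iff)
  moreover have "h1 + h2 = singular_sum s w"
    using invertible_fibre(2)[OF assms] calculation by simp
  ultimately show ?thesis using that by blast
qed

lemma singular_sum_neq_0:
  assumes "s \<noteq> 0" "w \<noteq> 0"
  shows "singular_sum s w \<noteq> 0"
  using invertible_fibre_pair[OF assms] by (metis mat_add_eq_0_iff)

text \<open>
  Adding the sum of the two invertible elements of \<open>fibre s (A *v s)\<close> swaps them, so this
  is the one other than \<open>A\<close>.
\<close>

definition partner :: "'f^'n \<Rightarrow> 'f^'n^'n \<Rightarrow> 'f^'n^'n" where
  "partner s A = A + singular_sum s (A *v s)"

lemma partner: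
  assumes "A \<in> invertibles" "s \<noteq> 0"
  shows "fibre s (A *v s) \<inter> invertibles = {A, partner s A}" and "partner s A \<noteq> A"
proof -
  have "A *v s \<noteq> 0"
    using assms invertibles_kills_only_0 by blast
  then obtain h1 h2 where h: "h1 \<noteq> h2" "fibre s (A *v s) \<inter> invertibles = {h1, h2}"
      "h1 + h2 = singular_sum s (A *v s)"
    using invertible_fibre_pair[OF \<open>s \<noteq> 0\<close>] by blast
  have "A \<in> {h1, h2}"
    using h(2) assms(1) invertibles_subset_C by (auto simp: fibre_def)
  then consider "A = h1" "partner s A = h2" | "A = h2" "partner s A = h1"
    unfolding partner_def h(3)[symmetric] by (auto simp: add.assoc[symmetric] add.commute[of h1 h2])
  then show "fibre s (A *v s) \<inter> invertibles = {A, partner s A}" "partner s A \<noteq> A"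
    using h(1,2) by (cases; auto)+
qed

lemma partner_in_invertibles: "A \<in> invertibles \<Longrightarrow> s \<noteq> 0 \<Longrightarrow> partner s A \<in> invertibles"
  and partner_eval: "A \<in> invertibles \<Longrightarrow> s \<noteq> 0 \<Longrightarrow> partner s A *v s = A *v s"
  using partner(1)[of A s] by (auto simp: fibre_def)

lemma partner_add_not_invertible:
  assumes "A \<in> invertibles" "B \<in> invertibles" "A + B \<in> invertibles" "s \<noteq> 0"
  shows "partner s A + B \<notin> invertibles"
proof
  assume E: "partner s A + B \<in> invertibles"
  have E_eq: "partner s A + B = (A + B) + singular_sum s (A *v s)"
    by (simp add: partner_def ac_simps)
  have "(partner s A + B) *v s = (A + B) *v s"
    using partner_eval[OF assms(1,4)] by (simp add: matrix_vector_mult_add_rdistrib)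
  then have "partner s A + B \<in> fibre s ((A + B) *v s) \<inter> invertibles"
    using E invertibles_subset_C by (auto simp: fibre_def)
  then consider "partner s A + B = A + B" | "partner s A + B = partner s (A + B)"
    unfolding partner(1)[OF assms(3,4)] by blast
  then show False
  proof cases
    case 1
    then have "singular_sum s (A *v s) = 0"
      using E_eq by simp
    then show False
      using singular_sum_neq_0 assms(1,4) invertibles_kills_only_0 by blast
  next
    case 2
    then have "singular_sum s (A *v s) = singular_sum s (A *v s + B *v s)"
      using E_eq by (simp add: partner_def matrix_vector_mult_add_rdistrib)
    then have "singular_sum s (B *v s) = 0"
      using singular_sum_add[OF assms(4)] by (simp add: add.assoc[symmetric])
    then show False
      using singular_sum_neq_0 assms(2,4) invertibles_kills_only_0 by blast
  qed
qed

lemma card_nonzero_vecs: "card (-{0::'f^'n}) = 2 ^ CARD('n) - 1"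
  using finite_vec card_vec by (simp add: Compl_eq_Diff_UNIV card_Diff_subset)

lemma zero_notin_invertibles: "0 \<notin> invertibles"
proof
  assume "0 \<in> invertibles"
  moreover obtain s :: "'f^'n" where "s \<noteq> 0"
    using exists_vec_notin[of 0 0 0] by auto
  ultimately show False
    using invertibles_kills_only_0 by auto
qed

definition compatibles :: "'f^'n^'n \<Rightarrow> ('f^'n^'n) set" where
  "compatibles A = {B \<in> invertibles. B = A \<or> A + B \<in> invertibles}"

lemma compatibles_subset: "compatibles A \<subseteq> invertibles"
  by (auto simp: compatibles_def)

lemma self_in_compatibles: "A \<in> invertibles \<Longrightarrow> A \<in> compatibles A"
  by (simp add: compatibles_def)

lemma incompatibles_eq:
  assumes "A \<in> invertibles"
  shows "invertibles - compatibles A = (\<lambda>s. partner s A) ` (-{0})"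
proof (intro equalityI subsetI)
  fix B assume "B \<in> invertibles - compatibles A"
  then have B: "B \<in> invertibles" "B \<noteq> A" "A + B \<notin> invertibles"
    by (auto simp: compatibles_def)
  have "A + B \<in> C"
    using add_in_C assms B(1) invertibles_subset_C by blast
  then obtain x where "x \<noteq> 0" "(A + B) *v x = 0"
    using not_invertible_kills B(3) by blast
  then have "A *v x = B *v x"
    by (simp only: matrix_vector_mult_add_rdistrib vec_add_eq_0_iff)
  then have "B \<in> fibre x (A *v x) \<inter> invertibles"
    using B(1) invertibles_subset_C by (auto simp: fibre_def)
  then have "B = partner x A"
    using partner(1)[OF assms \<open>x \<noteq> 0\<close>] B(2) by blast
  then show "B \<in> (\<lambda>s. partner s A) ` (-{0})"
    using \<open>x \<noteq> 0\<close> by blast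
next
  fix B assume "B \<in> (\<lambda>s. partner s A) ` (-{0})"
  then obtain s where "s \<noteq> 0" and B: "B = partner s A"
    by auto
  then have "(A + B) *v s = 0"
    using partner_eval[OF assms] by (simp add: matrix_vector_mult_add_rdistrib)
  then have "A + B \<notin> invertibles"
    using invertibles_kills_only_0 \<open>s \<noteq> 0\<close> by blast
  then show "B \<in> invertibles - compatibles A"
    using partner_in_invertibles[OF assms \<open>s \<noteq> 0\<close>] partner(2)[OF assms \<open>s \<noteq> 0\<close>] B
    by (auto simp: compatibles_def)
qed

lemma inj_on_partner:
  assumes "A \<in> invertibles"
  shows "inj_on (\<lambda>s. partner s A) (-{0})"
proof (rule inj_onI)
  fix s t assume "s \<in> -{0}" "t \<in> -{0}" and eq: "partner s A = partner t A"
  then have "s \<noteq> 0" "t \<noteq> 0" by auto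
  have "A + partner s A \<in> C"
    using add_in_C assms partner_in_invertibles[OF assms \<open>s \<noteq> 0\<close>] invertibles_subset_C by blast
  moreover have "(A + partner s A) *v s = 0" "(A + partner s A) *v t = 0"
    using partner_eval[OF assms \<open>s \<noteq> 0\<close>] partner_eval[OF assms \<open>t \<noteq> 0\<close>] eq
    by (simp_all add: matrix_vector_mult_add_rdistrib)
  moreover have "A + partner s A \<noteq> 0"
    using partner(2)[OF assms \<open>s \<noteq> 0\<close>] by (simp add: mat_add_eq_0_iff)
  ultimately show "s = t"
    using eq_0_if_kills_two \<open>s \<noteq> 0\<close> \<open>t \<noteq> 0\<close> by blast
qed

lemma card_incompatibles:
  assumes "A \<in> invertibles"
  shows "card (invertibles - compatibles A) = 2 ^ CARD('n) - 1"
  using card_image[OF inj_on_partner[OF assms]] card_nonzero_vecs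
  by (simp add: incompatibles_eq[OF assms])

lemma card_invertibles: "card invertibles = 2 * (2 ^ CARD('n) - 1)"
proof -
  obtain s :: "'f^'n" where "s \<noteq> 0"
    using exists_vec_notin[of 0 0 0] by auto
  have "invertibles = (\<Union>w\<in>-{0}. fibre s w \<inter> invertibles)"
  proof (intro equalityI subsetI)
    fix A assume "A \<in> invertibles"
    moreover from this have "A *v s \<noteq> 0"
      using invertibles_kills_only_0 \<open>s \<noteq> 0\<close> by blast
    ultimately show "A \<in> (\<Union>w\<in>-{0}. fibre s w \<inter> invertibles)"
      using invertibles_subset_C by (intro UN_I[of "A *v s"]) (auto simp: fibre_def)
  qed blast
  also have "card \<dots> = (\<Sum>w\<in>-{0}. card (fibre s w \<inter> invertibles))"
    using finite_vec finite_C by (intro card_UN_disjoint) (auto simp: fibre_def)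
  also have "\<dots> = (\<Sum>w\<in>-{0::'f^'n}. 2)"
    using invertible_fibre(1)[OF \<open>s \<noteq> 0\<close>] by simp
  also have "\<dots> = 2 * (2 ^ CARD('n) - 1)"
    using card_nonzero_vecs by simp
  finally show ?thesis .
qed

lemma card_compatibles:
  assumes "A \<in> invertibles"
  shows "card (compatibles A) = 2 ^ CARD('n) - 1"
proof -
  have "finite invertibles"
    using finite_C invertibles_subset_C by (rule finite_subset[rotated])
  then have "card (invertibles - compatibles A) = card invertibles - card (compatibles A)"
    and "card (compatibles A) \<le> card invertibles"
    using compatibles_subset by (auto intro: card_Diff_subset card_mono finite_subset)
  then show ?thesis
    using card_incompatibles[OF assms] card_invertibles by linarith
qed

lemma incompatibles_subset:
  assumes "A \<in> invertibles" "B \<in> invertibles" "A + B \<in> invertibles"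
  shows "invertibles - compatibles A \<subseteq> invertibles - compatibles B"
proof
  fix P assume P: "P \<in> invertibles - compatibles A"
  then obtain s where "s \<noteq> 0" "P = partner s A"
    using incompatibles_eq[OF assms(1)] by auto
  have "P \<noteq> B"
    using P assms(3) by (auto simp: compatibles_def)
  moreover have "B + P \<notin> invertibles"
    using partner_add_not_invertible[OF assms \<open>s \<noteq> 0\<close>] \<open>P = partner s A\<close>
    by (simp add: add.commute)
  ultimately show "P \<in> invertibles - compatibles B"
    using P by (auto simp: compatibles_def)
qed

lemma compatibles_eq:
  assumes "A \<in> invertibles" "B \<in> compatibles A"
  shows "compatibles B = compatibles A"
proof (cases "B = A")
  case False
  then have "B \<in> invertibles" "A + B \<in> invertibles" "B + A \<in> invertibles"
    using assms(2) by (auto simp: compatibles_def add.commute)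
  then have "invertibles - compatibles A = invertibles - compatibles B"
    using incompatibles_subset assms(1) by blast
  then show ?thesis
    using compatibles_subset by blast
qed simp

lemma spread_set_compatibles:
  assumes "A \<in> invertibles"
  shows "spread_set (insert 0 (compatibles A))"
  unfolding spread_set_def
proof (intro conjI ballI impI)
  show "additively_closed (insert 0 (compatibles A))"
    unfolding additively_closed_def
  proof (intro ballI)
    fix P R assume mem: "P \<in> insert 0 (compatibles A)" "R \<in> insert 0 (compatibles A)"
    show "P + R \<in> insert 0 (compatibles A)"
    proof (cases "P = 0 \<or> R = 0 \<or> P = R")
      case True
      then show ?thesis using mem by auto
    next
      case False
      then have P: "P \<in> compatibles A" and R: "R \<in> compatibles A" and "P \<noteq> R" "R \<noteq> 0"
        using mem by auto
      then have "P \<in> invertibles" "R \<in> invertibles"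
        using compatibles_subset by blast+
      have "compatibles P = compatibles A"
        using compatibles_eq[OF assms P] .
      then have "R \<in> compatibles P"
        using R by simp
      then have "P + R \<in> invertibles"
        using \<open>P \<noteq> R\<close> by (auto simp: compatibles_def)
      moreover have "P + (P + R) \<in> invertibles"
        using \<open>R \<in> invertibles\<close> by (simp add: add.assoc[symmetric])
      ultimately have "P + R \<in> compatibles P"
        by (simp add: compatibles_def)
      then show ?thesis
        using \<open>compatibles P = compatibles A\<close> by simp
    qed
  qed
  show "card (insert 0 (compatibles A)) = CARD('f^'n)"
  proof -
    have "finite (compatibles A)"
      using finite_C compatibles_subset invertibles_subset_C by (meson finite_subset)
    moreover have "0 \<notin> compatibles A"
      using compatibles_subset zero_notin_invertibles by blast
    ultimately show ?thesis
      using card_compatibles[OF assms] four_le_card_vec card_vec by simp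
  qed
  fix B assume "B \<in> insert 0 (compatibles A)" "B \<noteq> 0"
  then show "invertible B"
    using compatibles_subset by (auto simp: invertibles_def)
qed

lemma two_spread_sets:
  "\<exists>S1 S2. spread_set S1 \<and> spread_set S2 \<and> S1 \<subseteq> C \<and> S2 \<subseteq> C \<and> S1 \<inter> S2 = {0}"
proof -
  have "(4::nat) \<le> 2 ^ CARD('n)"
    using four_le_card_vec card_vec by simp
  then have "card invertibles \<noteq> 0"
    using card_invertibles by simp
  then obtain A where A: "A \<in> invertibles"
    by (metis card.empty ex_in_conv)
  then have "card (invertibles - compatibles A) \<noteq> 0"
    using card_incompatibles \<open>4 \<le> 2 ^ CARD('n)\<close> by simp
  then obtain B where B: "B \<in> invertibles - compatibles A"
    by (metis card.empty ex_in_conv)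
  have "compatibles A \<inter> compatibles B = {}"
  proof (rule ccontr)
    assume "compatibles A \<inter> compatibles B \<noteq> {}"
    then obtain D where "D \<in> compatibles A" "D \<in> compatibles B" by blast
    have "compatibles D = compatibles A"
      using compatibles_eq[OF A \<open>D \<in> compatibles A\<close>] .
    moreover have "compatibles D = compatibles B"
      using compatibles_eq[OF _ \<open>D \<in> compatibles B\<close>] B by blast
    ultimately have "compatibles B = compatibles A"
      by simp
    then show False
      using B self_in_compatibles by blast
  qed
  moreover have "insert 0 (compatibles X) \<subseteq> C" for X
    using zero_in_C compatibles_subset invertibles_subset_C by blast
  ultimately show ?thesis
    using spread_set_compatibles A B by blast
qed

end

theorem mainTheorem1:
  fixes C :: "('f::field ^ 'n ^ 'n) set"
  assumes F2: "CARD('f) = 2"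
    and add: "additively_closed C"
    and card: "card C = 2 ^ (2 * CARD('n))"
    and rk: "\<forall>A\<in>C. A \<noteq> 0 \<longrightarrow> rank A \<ge> CARD('n) - 1"
  shows "(\<exists>(star :: 'f ^ 'n \<Rightarrow> 'f ^ 'n \<Rightarrow> 'f ^ 'n) (circ :: 'f ^ 'n \<Rightarrow> 'f ^ 'n \<Rightarrow> 'f ^ 'n).
            presemifield star \<and> presemifield circ \<and>
            (\<lambda>A. (\<lambda>x. A *v x)) ` C = {(\<lambda>x. star a x - circ b x) | a b. True})
       \<and> (\<exists>C' \<subseteq> C. additively_closed C' \<and> card C' = 2 ^ CARD('n) \<and>
            (\<forall>A\<in>C'. A \<noteq> 0 \<longrightarrow> invertible A))"
proof -
  interpret binary_mrd_code C
    using F2 add card rk by unfold_locales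
  obtain S1 S2 where S: "spread_set S1" "spread_set S2" "S1 \<subseteq> C" "S2 \<subseteq> C" "S1 \<inter> S2 = {0}"
    using two_spread_sets by blast
  then have closed: "additively_closed S1" "additively_closed S2"
    and card_S: "card S1 = 2 ^ CARD('n)" "card S2 = 2 ^ CARD('n)"
    and invertible_S1: "\<forall>A\<in>S1. A \<noteq> 0 \<longrightarrow> invertible A"
    by (simp_all add: spread_set_def F2)
  have "C = {P + R | P R. P \<in> S1 \<and> R \<in> S2}"
    using card card_S
    by (intro char2_direct_sum[OF mat_add_self closed add S(3-5) finite_C])
      (simp add: power_add[symmetric] mult_2)
  then show ?thesis
    using card2_direct_sum_presemifields[OF F2 S(1,2)] S(3) closed(1) card_S(1) invertible_S1
    by blast
qed

end
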